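(* If $\tau\in\mathcal{T}$ and $(\mathbb{R},\tau)$ is locally connected, then $(\mathbb{R},\tau)$ is locally compact and completely metrizable, and $\Gamma(\tau)$ is closed in the Euclidean topology. Moreover, $\Gamma(\tau)$ is countable if and only if $(\mathbb{R},\tau)$ is second countable.
   Context: $\eta$ denotes the Euclidean topology on $\mathbb{R}$; $\mathcal{T}$ is the family of all topologies on $\mathbb{R}$ finer than $\eta$. $\Gamma(\tau)=\{x\in\mathbb{R}:\mathcal{U}_\eta(x)\neq\mathcal{U}_\tau(x)\}$ where $\mathcal{U}_\tau(x)$ is the neighborhood filter of $x$ in $\tau$. *)

theory Defs
  imports "HOL-Analysis.Analysis"
begin

definition finer_than_euclidean :: "real topology \<Rightarrow> bool" where
  "finer_than_euclidean \<tau> \<longleftrightarrow> topspace \<tau> = UNIV \<and> (\<forall>U. open U \<longrightarrow> openin \<tau> U)"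

definition Gamma :: "real topology \<Rightarrow> real set" where
  "Gamma \<tau> = {x. nhdsin euclideanreal x \<noteq> nhdsin \<tau> x}"

end

theory Submission
  imports Defs
begin

(* Since tau refines the Euclidean topology, its connected sets are intervals. Let side x be the
   intersection of those of the half-lines {x..}, {..x} that are tau-open; Gamma tau consists of
   the points x with side x different from the whole line. A connected tau-open U with x in U
   and U inside side x is an interval, and no point strictly inside it has a one-sided
   tau-neighbourhood. So the sets ball x e \<inter> side x form a tau-neighbourhood base at x, they are
   tau-open for small e, and their points other than x lie outside Gamma tau. This gives
   closedness of Gamma tau and the compact neighbourhoods cball x e \<inter> side x. The metric
   |x - y| + [some w between x and y has x or y outside side w] has these sets as its small
   balls, so tau is metrizable, hence completely metrizable by local compactness.
   A point of Gamma tau whose side is a half-line is isolated from Gamma tau on the open side,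
   so there are countably many such points; the others are tau-isolated, and these are
   countable iff tau is second countable. *)

lemma second_countable_imp_countable_isolated_points:
  assumes "second_countable X"
  shows "countable {x. openin X {x}}"
proof -
  let ?I = "{x. openin X {x}}"
  have "discrete_topology ?I = subtopology X ?I"
    unfolding discrete_topology_unique
    by (force simp: openin_subtopology dest: openin_subset)
  then show ?thesis
    by (metis assms second_countable_discrete_topology second_countable_subtopology)
qed

lemma countable_right_isolated:
  fixes A :: "real set"
  assumes "\<And>x. x \<in> A \<Longrightarrow> \<exists>e>0. {x<..<x+e} \<inter> A = {}"
  shows "countable A"
proof -
  have "\<exists>q \<in> \<rat>. x < q \<and> {x<..q} \<inter> A = {}" if x: "x \<in> A" for x
  proof -
    obtain e where "e > 0" "{x<..<x+e} \<inter> A = {}" using assms x by blast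
    moreover obtain q where "q \<in> \<rat>" "x < q" "q < x + e"
      using Rats_dense_in_real[of x "x + e"] \<open>e > 0\<close> by auto
    moreover have "{x<..q} \<subseteq> {x<..<x+e}"
      using \<open>q < x + e\<close> by auto
    ultimately show ?thesis by blast
  qed
  then obtain q where q: "\<And>x. x \<in> A \<Longrightarrow> q x \<in> \<rat> \<and> x < q x \<and> {x<..q x} \<inter> A = {}"
    by metis
  have "inj_on q A"
  proof (rule inj_onI)
    fix x y assume "x \<in> A" "y \<in> A" "q x = q y"
    with q[of x] q[of y] show "x = y"
      by (cases x y rule: linorder_cases) (auto simp: disjoint_iff)
  qed
  moreover have "countable (q ` A)"
    using q by (blast intro: countable_subset[OF _ countable_rat])
  ultimately show ?thesis
    using countable_image_inj_on by blast
qed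

lemma countable_left_isolated:
  fixes A :: "real set"
  assumes "\<And>x. x \<in> A \<Longrightarrow> \<exists>e>0. {x-e<..<x} \<inter> A = {}"
  shows "countable A"
proof -
  have "countable (uminus ` A)"
  proof (rule countable_right_isolated)
    fix x assume "x \<in> uminus ` A"
    then obtain e where "e > 0" "{-x-e<..<-x} \<inter> A = {}"
      using assms by force
    then show "\<exists>e>0. {x<..<x+e} \<inter> uminus ` A = {}"
      by (intro exI[of _ e]) force
  qed
  then show ?thesis
    using countable_image[of "uminus ` A" uminus] by (simp add: image_image)
qed

lemma compactin_if_traces_open:
  fixes X :: "'a::metric_space topology"
  assumes "compact K" "K \<subseteq> topspace X"
    and "\<And>S y. openin X S \<Longrightarrow> y \<in> K \<Longrightarrow> y \<in> S \<Longrightarrow> \<exists>e>0. K \<inter> ball y e \<subseteq> S"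
  shows "compactin X K"
proof -
  have "continuous_map (top_of_set K) X id"
    unfolding continuous_map_def
  proof (intro conjI allI impI)
    fix S assume "openin X S"
    then have "openin (top_of_set K) (K \<inter> S)"
      unfolding openin_contains_ball using assms(3) by (simp add: Int_commute)
    then show "openin (top_of_set K) {x \<in> topspace (top_of_set K). id x \<in> S}"
      by (simp add: Int_def)
  qed (use assms(2) in auto)
  then show ?thesis
    using image_compactin[of "top_of_set K" K X id] assms(1) by (simp add: compactin_subtopology)
qed

locale locally_connected_refinement =
  fixes \<tau> :: "real topology"
  assumes finer: "finer_than_euclidean \<tau>"
    and locally_connected: "locally_connected_space \<tau>"
begin

lemma topspace [simp]: "topspace \<tau> = UNIV"
  using finer by (simp add: finer_than_euclidean_def)

lemma openin_if_open: "open U \<Longrightarrow> openin \<tau> U"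
  using finer by (simp add: finer_than_euclidean_def)

lemma connectedin_imp_is_interval: "connectedin \<tau> C \<Longrightarrow> is_interval C"
proof -
  assume "connectedin \<tau> C"
  moreover have "continuous_map \<tau> euclideanreal id"
    by (simp add: continuous_map_def openin_if_open)
  ultimately have "connectedin euclideanreal (id ` C)"
    using connectedin_continuous_map_image by blast
  then show ?thesis
    by (simp add: is_interval_connected_1)
qed

lemma connected_nbhdE:
  assumes "openin \<tau> S" "x \<in> S"
  obtains U where "openin \<tau> U" "connectedin \<tau> U" "x \<in> U" "U \<subseteq> S"
  using locally_connected assms unfolding locally_connected_space by blast

definition side :: "real \<Rightarrow> real set" where
  "side x = {y. (openin \<tau> {x..} \<longrightarrow> x \<le> y) \<and> (openin \<tau> {..x} \<longrightarrow> y \<le> x)}"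

lemma side_eq:
  "side x = (if openin \<tau> {x..} then {x..} else UNIV) \<inter> (if openin \<tau> {..x} then {..x} else UNIV)"
  by (auto simp: side_def)

lemma side_cases:
  obtains "side x = UNIV" | "side x = {x..}" | "side x = {..x}" | "side x = {x}"
proof -
  have "{x..} \<inter> {..x} = {x}" by auto
  then show ?thesis
    by (cases "openin \<tau> {x..}"; cases "openin \<tau> {..x}") (simp_all add: side_eq that)
qed

lemma openin_UNIV [simp]: "openin \<tau> UNIV"
  using openin_topspace[of \<tau>] by simp

lemma openin_side: "openin \<tau> (side x)"
  unfolding side_eq by (intro openin_Int) simp_all

lemma mem_side [simp]: "x \<in> side x"
  by (simp add: side_def)

lemma is_interval_side: "is_interval (side x)"
  using is_interval_cc[of x x] by (cases x rule: side_cases) simp_all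

lemma closed_side: "closed (side x)"
  by (cases x rule: side_cases) simp_all

lemma open_side_minus: "open (side x - {x})"
proof -
  have "{x..} - {x} = {x<..}" "{..x} - {x} = {..<x}" by auto
  then show ?thesis
    by (cases x rule: side_cases) (simp_all add: open_Diff)
qed

lemma side_eq_UNIV_if_between:
  assumes C: "connectedin \<tau> C" and "a \<in> C" "b \<in> C" "a < z" "z < b"
  shows "side z = UNIV"
proof -
  have "\<not> openin \<tau> {z..}"
  proof
    assume "openin \<tau> {z..}"
    then have "separatedin \<tau> {..<z} {z..}"
      by (auto simp: separatedin_open_sets openin_if_open disjnt_def)
    moreover have "C \<subseteq> {..<z} \<union> {z..}" by auto
    ultimately show False
      using connectedin_subset_separated_union[OF C] assms by fastforce
  qed
  moreover have "\<not> openin \<tau> {..z}"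
  proof
    assume "openin \<tau> {..z}"
    then have "separatedin \<tau> {..z} {z<..}"
      by (auto simp: separatedin_open_sets openin_if_open disjnt_def)
    moreover have "C \<subseteq> {..z} \<union> {z<..}" by auto
    ultimately show False
      using connectedin_subset_separated_union[OF C] assms by fastforce
  qed
  ultimately show ?thesis
    by (simp add: side_def)
qed

lemma connected_nbhd_contains_right_side:
  assumes U: "openin \<tau> U" "connectedin \<tau> U" "x \<in> U"
  obtains b where "x < b" "{x..<b} \<inter> side x \<subseteq> U"
proof (cases "openin \<tau> {..x}")
  case True
  then have "side x \<subseteq> {..x}"
    by (auto simp: side_def)
  then show thesis
    using U(3) by (intro that[of "x + 1"]) auto
next
  case False
  have "\<not> U \<subseteq> {..x}"
  proof
    assume "U \<subseteq> {..x}"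
    then have "{..x} = U \<union> {..<x}"
      using U(3) by (auto simp: order_le_less)
    with False show False
      using U(1) openin_if_open[of "{..<x}"] by (metis open_lessThan openin_Un)
  qed
  then obtain c where "c \<in> U" "x < c"
    by (meson atMost_iff not_le subsetI)
  then have "{x..c} \<subseteq> U"
    using connectedin_imp_is_interval[OF U(2)] U(3) by (meson atLeastAtMost_iff is_interval_1 subsetI)
  then show thesis
    using \<open>x < c\<close> by (intro that[of c]) auto
qed

lemma connected_nbhd_contains_left_side:
  assumes U: "openin \<tau> U" "connectedin \<tau> U" "x \<in> U"
  obtains a where "a < x" "{a<..x} \<inter> side x \<subseteq> U"
proof (cases "openin \<tau> {x..}")
  case True
  then have "side x \<subseteq> {x..}"
    by (auto simp: side_def)
  then show thesis
    using U(3) by (intro that[of "x - 1"]) auto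
next
  case False
  have "\<not> U \<subseteq> {x..}"
  proof
    assume "U \<subseteq> {x..}"
    then have "{x..} = U \<union> {x<..}"
      using U(3) by (auto simp: order_le_less)
    with False show False
      using U(1) openin_if_open[of "{x<..}"] by (metis open_greaterThan openin_Un)
  qed
  then obtain c where "c \<in> U" "c < x"
    by (meson atLeast_iff not_le subsetI)
  then have "{c..x} \<subseteq> U"
    using connectedin_imp_is_interval[OF U(2)] U(3) by (meson atLeastAtMost_iff is_interval_1 subsetI)
  then show thesis
    using \<open>c < x\<close> by (intro that[of c]) auto
qed

lemma connected_nbhd_contains_side_ball:
  assumes "openin \<tau> U" "connectedin \<tau> U" "x \<in> U"
  obtains e where "e > 0" "ball x e \<inter> side x \<subseteq> U"
proof -
  obtain b where b: "x < b" "{x..<b} \<inter> side x \<subseteq> U"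
    using connected_nbhd_contains_right_side[OF assms] .
  obtain a where a: "a < x" "{a<..x} \<inter> side x \<subseteq> U"
    using connected_nbhd_contains_left_side[OF assms] .
  have "ball x (min (b - x) (x - a)) \<subseteq> {a<..x} \<union> {x..<b}"
    by (auto simp: dist_real_def)
  then show thesis
    using a b by (intro that[of "min (b - x) (x - a)"]) auto
qed

lemma openin_contains_side_ball:
  assumes "openin \<tau> S" "x \<in> S"
  obtains e where "e > 0" "ball x e \<inter> side x \<subseteq> S"
proof -
  obtain U where U: "openin \<tau> U" "connectedin \<tau> U" "x \<in> U" "U \<subseteq> S"
    using connected_nbhdE[OF assms] .
  obtain e where "e > 0" "ball x e \<inter> side x \<subseteq> U"
    using connected_nbhd_contains_side_ball[OF U(1-3)] .
  with U(4) show thesis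
    by (intro that[of e]) auto
qed

lemma small_side_balls:
  obtains r where "r > 0"
    "\<And>e. e \<le> r \<Longrightarrow> openin \<tau> (ball x e \<inter> side x)"
    "\<And>y. y \<in> ball x r \<inter> side x \<Longrightarrow> y \<noteq> x \<Longrightarrow> side y = UNIV"
proof -
  obtain U where U: "openin \<tau> U" "connectedin \<tau> U" "x \<in> U" "U \<subseteq> side x"
    using connected_nbhdE[OF openin_side mem_side] .
  obtain r where r: "r > 0" "ball x r \<inter> side x \<subseteq> U"
    using connected_nbhd_contains_side_ball[OF U(1-3)] .
  show thesis
  proof (rule that[OF r(1)])
    fix e assume "e \<le> r"
    then have "ball x e \<inter> side x = ball x e \<inter> U"
      using r(2) U(4) subset_ball[of e r x] by blast
    then show "openin \<tau> (ball x e \<inter> side x)"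
      using U(1) by (simp add: openin_Int openin_if_open)
  next
    fix y assume y: "y \<in> ball x r \<inter> side x" "y \<noteq> x"
    \<comment> \<open>away from x, side x is a Euclidean neighbourhood of its points, so y lies strictly inside U\<close>
    have "open (ball x r \<inter> (side x - {x}))"
      by (simp add: open_Int open_side_minus)
    moreover have "y \<in> ball x r \<inter> (side x - {x})"
      using y by blast
    ultimately obtain d where "d > 0" "ball y d \<subseteq> ball x r \<inter> (side x - {x})"
      by (rule openE)
    moreover have "y - d/2 \<in> ball y d" "y + d/2 \<in> ball y d"
      using \<open>d > 0\<close> by (simp_all add: dist_real_def)
    ultimately have "y - d/2 \<in> U" "y + d/2 \<in> U"
      using r(2) by blast+
    then show "side y = UNIV"
      using side_eq_UNIV_if_between[OF U(2)] \<open>d > 0\<close> by simp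
  qed
qed

lemma openin_iff_side_balls: "openin \<tau> S \<longleftrightarrow> (\<forall>x\<in>S. \<exists>e>0. ball x e \<inter> side x \<subseteq> S)"
proof
  assume "openin \<tau> S"
  then show "\<forall>x\<in>S. \<exists>e>0. ball x e \<inter> side x \<subseteq> S"
    by (meson openin_contains_side_ball)
next
  assume S: "\<forall>x\<in>S. \<exists>e>0. ball x e \<inter> side x \<subseteq> S"
  show "openin \<tau> S"
  proof (subst openin_subopen, intro ballI)
    fix x assume "x \<in> S"
    then obtain e where e: "e > 0" "ball x e \<inter> side x \<subseteq> S"
      using S by blast
    obtain r where "r > 0" and r: "\<And>e. e \<le> r \<Longrightarrow> openin \<tau> (ball x e \<inter> side x)"
      using small_side_balls by metis
    have "openin \<tau> (ball x (min e r) \<inter> side x)"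
      by (simp add: r)
    moreover have "ball x (min e r) \<inter> side x \<subseteq> S"
      using e(2) by auto
    ultimately show "\<exists>T. openin \<tau> T \<and> x \<in> T \<and> T \<subseteq> S"
      using e(1) \<open>r > 0\<close> by (intro exI[of _ "ball x (min e r) \<inter> side x"]) simp
  qed
qed

lemma nhdsin_eq_if_side_eq_UNIV:
  assumes "side x = UNIV"
  shows "nhdsin \<tau> x = nhdsin euclideanreal x"
  unfolding filter_eq_iff eventually_nhdsin
proof (intro allI iffI)
  fix P assume "x \<notin> topspace \<tau> \<or> (\<exists>S. openin \<tau> S \<and> x \<in> S \<and> (\<forall>y\<in>S. P y))"
  then obtain S where "openin \<tau> S" "x \<in> S" "\<forall>y\<in>S. P y"
    by auto
  moreover obtain e where "e > 0" "ball x e \<inter> side x \<subseteq> S"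
    using openin_contains_side_ball calculation(1,2) .
  ultimately show "x \<notin> topspace euclideanreal \<or> (\<exists>S. openin euclideanreal S \<and> x \<in> S \<and> (\<forall>y\<in>S. P y))"
    using assms by (intro disjI2 exI[of _ "ball x e"]) auto
next
  fix P assume "x \<notin> topspace euclideanreal \<or> (\<exists>S. openin euclideanreal S \<and> x \<in> S \<and> (\<forall>y\<in>S. P y))"
  then show "x \<notin> topspace \<tau> \<or> (\<exists>S. openin \<tau> S \<and> x \<in> S \<and> (\<forall>y\<in>S. P y))"
    using openin_if_open by auto
qed

lemma Gamma_eq: "Gamma \<tau> = {x. side x \<noteq> UNIV}"
proof (intro set_eqI iffI)
  fix x assume "x \<in> Gamma \<tau>"
  then show "x \<in> {x. side x \<noteq> UNIV}"
    using nhdsin_eq_if_side_eq_UNIV by (auto simp: Gamma_def)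
next
  fix x assume "x \<in> {x. side x \<noteq> UNIV}"
  then have "x \<notin> interior (side x)"
    by (cases x rule: side_cases) simp_all
  then have "\<not> eventually (\<lambda>y. y \<in> side x) (nhdsin euclideanreal x)"
    by (auto simp: eventually_nhdsin interior_def)
  moreover have "eventually (\<lambda>y. y \<in> side x) (nhdsin \<tau> x)"
    unfolding eventually_nhdsin using openin_side mem_side by blast
  ultimately show "x \<in> Gamma \<tau>"
    by (auto simp: Gamma_def)
qed

lemma closed_Gamma: "closed (Gamma \<tau>)"
  unfolding closed_def open_contains_ball Gamma_eq
proof (intro ballI)
  fix x assume x: "x \<in> - {x. side x \<noteq> UNIV}"
  obtain r where "r > 0" and far: "\<And>y. y \<in> ball x r \<inter> side x \<Longrightarrow> y \<noteq> x \<Longrightarrow> side y = UNIV"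
    using small_side_balls by metis
  have "side y = UNIV" if "y \<in> ball x r" for y
    using x far[of y] that by (cases "y = x") auto
  then show "\<exists>e>0. ball x e \<subseteq> - {x. side x \<noteq> UNIV}"
    using \<open>r > 0\<close> by blast
qed

lemma locally_compact: "locally_compact_space \<tau>"
  unfolding locally_compact_space_def
proof (intro ballI)
  fix x
  obtain r where "r > 0"
    and open_ball: "\<And>e. e \<le> r \<Longrightarrow> openin \<tau> (ball x e \<inter> side x)"
    and far: "\<And>y. y \<in> ball x r \<inter> side x \<Longrightarrow> y \<noteq> x \<Longrightarrow> side y = UNIV"
    using small_side_balls by metis
  let ?K = "cball x (r/2) \<inter> side x"
  have "compactin \<tau> ?K"
  proof (rule compactin_if_traces_open)
    show "compact ?K"
      by (simp add: compact_Int_closed closed_side)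
  next
    fix S y assume "openin \<tau> S" "y \<in> ?K" "y \<in> S"
    moreover obtain e where "e > 0" "ball y e \<inter> side y \<subseteq> S"
      using openin_contains_side_ball calculation(1,3) .
    moreover have "?K \<subseteq> side y"
      using far[of y] \<open>y \<in> ?K\<close> \<open>r > 0\<close> by (cases "y = x") auto
    ultimately show "\<exists>e>0. ?K \<inter> ball y e \<subseteq> S"
      by blast
  qed simp
  moreover have "openin \<tau> (ball x (r/2) \<inter> side x)"
    using \<open>r > 0\<close> by (simp add: open_ball)
  ultimately show "\<exists>U K. openin \<tau> U \<and> compactin \<tau> K \<and> x \<in> U \<and> U \<subseteq> K"
    using \<open>r > 0\<close> by (intro exI[of _ "ball x (r/2) \<inter> side x"] exI[of _ ?K]) auto
qed

definition jump :: "real \<Rightarrow> real \<Rightarrow> bool" where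
  "jump x y \<longleftrightarrow> (\<exists>w. (x \<le> w \<and> w \<le> y \<or> y \<le> w \<and> w \<le> x) \<and> (x \<notin> side w \<or> y \<notin> side w))"

definition side_dist :: "real \<Rightarrow> real \<Rightarrow> real" where
  "side_dist x y = dist x y + (if jump x y then 1 else 0)"

lemma jump_commute: "jump x y \<longleftrightarrow> jump y x"
  unfolding jump_def by blast

lemma not_jump_refl: "\<not> jump x x"
  unfolding jump_def by (auto dest: antisym)

lemma not_mem_side_same_side:
  assumes "x \<notin> side w" "x < w \<and> y < w \<or> w < x \<and> w < y"
  shows "y \<notin> side w"
  using assms by (cases w rule: side_cases) auto

lemma jump_triangle:
  assumes "jump x z"
  shows "jump x y \<or> jump y z"
proof -
  obtain w where w: "x \<le> w \<and> w \<le> z \<or> z \<le> w \<and> w \<le> x" "x \<notin> side w \<or> z \<notin> side w"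
    using assms unfolding jump_def by blast
  consider "x \<le> w \<and> w \<le> y \<or> y \<le> w \<and> w \<le> x" "y \<le> w \<and> w \<le> z \<or> z \<le> w \<and> w \<le> y"
    | "x < w \<and> y < w \<or> w < x \<and> w < y" "y \<le> w \<and> w \<le> z \<or> z \<le> w \<and> w \<le> y"
    | "x \<le> w \<and> w \<le> y \<or> y \<le> w \<and> w \<le> x" "y < w \<and> z < w \<or> w < y \<and> w < z"
    using w(1) by linarith
  then show ?thesis
    using w(2) not_mem_side_same_side unfolding jump_def by cases blast+
qed

lemma metric_side_dist: "Metric_space UNIV side_dist"
proof
  fix x y z :: real
  show "0 \<le> side_dist x y"
    by (simp add: side_dist_def)
  show "side_dist x y = side_dist y x"
    by (simp add: side_dist_def jump_commute dist_commute)
  show "side_dist x y = 0 \<longleftrightarrow> x = y"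
    by (auto simp: side_dist_def not_jump_refl add_nonneg_eq_0_iff)
  show "side_dist x z \<le> side_dist x y + side_dist y z"
    using jump_triangle[of x z y] dist_triangle[of x z y] by (auto simp: side_dist_def)
qed

interpretation side_metric: Metric_space UNIV side_dist
  by (rule metric_side_dist)

lemma mball_side_dist:
  obtains r where "r > 0" "\<And>e. e \<le> r \<Longrightarrow> side_metric.mball x e = ball x e \<inter> side x"
proof -
  obtain r where "r > 0" and far: "\<And>y. y \<in> ball x r \<inter> side x \<Longrightarrow> y \<noteq> x \<Longrightarrow> side y = UNIV"
    using small_side_balls by metis
  have jump_iff: "jump x y \<longleftrightarrow> y \<notin> side x" if "y \<in> ball x r" for y
  proof
    assume "jump x y"
    then obtain w where w: "x \<le> w \<and> w \<le> y \<or> y \<le> w \<and> w \<le> x" "x \<notin> side w \<or> y \<notin> side w"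
      unfolding jump_def by blast
    show "y \<notin> side x"
    proof
      assume "y \<in> side x"
      then have "w \<in> side x"
        using w(1) mem_is_interval_1_I[OF is_interval_side] by (metis mem_side)
      moreover have "w \<in> ball x r"
        using w(1) that by (auto simp: dist_real_def)
      ultimately have "side w = UNIV \<or> w = x"
        using far[of w] by auto
      with w(2) \<open>y \<in> side x\<close> show False
        by auto
    qed
  next
    assume "y \<notin> side x"
    then show "jump x y"
      unfolding jump_def by (intro exI[of _ x]) auto
  qed
  have mball_eq: "side_metric.mball x e = ball x e \<inter> side x" if "e \<le> min r 1" for e
  proof (intro set_eqI)
    fix y
    have "y \<in> side_metric.mball x e \<longleftrightarrow> dist x y < e \<and> \<not> jump x y"
      using that zero_le_dist[of x y] unfolding side_metric.in_mball side_dist_def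
      by (auto simp del: zero_le_dist)
    then show "y \<in> side_metric.mball x e \<longleftrightarrow> y \<in> ball x e \<inter> side x"
      using that jump_iff[of y] by auto
  qed
  show thesis
  proof (rule that[of "min r 1"])
    show "0 < min r 1"
      using \<open>r > 0\<close> by simp
  qed (fact mball_eq)
qed

lemma mtopology_side_dist: "side_metric.mtopology = \<tau>"
proof -
  have "(\<exists>r>0. side_metric.mball x r \<subseteq> S) \<longleftrightarrow> (\<exists>e>0. ball x e \<inter> side x \<subseteq> S)" for x S
  proof -
    obtain r where "r > 0" and r: "\<And>e. e \<le> r \<Longrightarrow> side_metric.mball x e = ball x e \<inter> side x"
      using mball_side_dist by metis
    show ?thesis
    proof
      assume "\<exists>e>0. side_metric.mball x e \<subseteq> S"
      then obtain e where "e > 0" and e: "side_metric.mball x e \<subseteq> S"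
        by blast
      have "ball x (min e r) \<inter> side x = side_metric.mball x (min e r)"
        using r by simp
      also have "\<dots> \<subseteq> side_metric.mball x e"
        by (rule side_metric.mball_subset_concentric) simp
      finally have "ball x (min e r) \<inter> side x \<subseteq> S"
        using e by (rule order_trans)
      then show "\<exists>e>0. ball x e \<inter> side x \<subseteq> S"
        using \<open>e > 0\<close> \<open>r > 0\<close> by (intro exI[of _ "min e r"] conjI) simp_all
    next
      assume "\<exists>e>0. ball x e \<inter> side x \<subseteq> S"
      then obtain e where "e > 0" and e: "ball x e \<inter> side x \<subseteq> S"
        by blast
      have "side_metric.mball x (min e r) = ball x (min e r) \<inter> side x"
        using r by simp
      also have "\<dots> \<subseteq> ball x e \<inter> side x"
        by auto
      finally have "side_metric.mball x (min e r) \<subseteq> S"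
        using e by (rule order_trans)
      then show "\<exists>r>0. side_metric.mball x r \<subseteq> S"
        using \<open>e > 0\<close> \<open>r > 0\<close> by (intro exI[of _ "min e r"] conjI) simp_all
    qed
  qed
  then show ?thesis
    unfolding topology_eq side_metric.openin_mtopology openin_iff_side_balls by auto
qed

lemma metrizable: "metrizable_space \<tau>"
  using side_metric.metrizable_space_mtopology by (simp add: mtopology_side_dist)

lemma Gamma_free_right:
  assumes "\<not> openin \<tau> {..x}"
  obtains e where "e > 0" "{x<..<x+e} \<inter> Gamma \<tau> = {}"
proof -
  obtain r where "r > 0" and far: "\<And>y. y \<in> ball x r \<inter> side x \<Longrightarrow> y \<noteq> x \<Longrightarrow> side y = UNIV"
    using small_side_balls by metis
  have "{x..} \<subseteq> side x"
    using assms by (auto simp: side_def)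
  have "side y = UNIV" if "y \<in> {x<..<x+r}" for y
  proof (rule far)
    show "y \<in> ball x r \<inter> side x"
      using \<open>{x..} \<subseteq> side x\<close> that by (auto simp: dist_real_def)
  qed (use that in simp)
  with \<open>r > 0\<close> show thesis
    by (intro that[of r]) (auto simp: Gamma_eq)
qed

lemma Gamma_free_left:
  assumes "\<not> openin \<tau> {x..}"
  obtains e where "e > 0" "{x-e<..<x} \<inter> Gamma \<tau> = {}"
proof -
  obtain r where "r > 0" and far: "\<And>y. y \<in> ball x r \<inter> side x \<Longrightarrow> y \<noteq> x \<Longrightarrow> side y = UNIV"
    using small_side_balls by metis
  have "{..x} \<subseteq> side x"
    using assms by (auto simp: side_def)
  have "side y = UNIV" if "y \<in> {x-r<..<x}" for y
  proof (rule far)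
    show "y \<in> ball x r \<inter> side x"
      using \<open>{..x} \<subseteq> side x\<close> that by (auto simp: dist_real_def)
  qed (use that in simp)
  with \<open>r > 0\<close> show thesis
    by (intro that[of r]) (auto simp: Gamma_eq)
qed

lemma countable_Gamma_if_second_countable:
  assumes "second_countable \<tau>"
  shows "countable (Gamma \<tau>)"
proof -
  let ?R = "{x \<in> Gamma \<tau>. \<not> openin \<tau> {..x}}" and ?L = "{x \<in> Gamma \<tau>. \<not> openin \<tau> {x..}}"
  have "openin \<tau> {x}" if "openin \<tau> {..x}" "openin \<tau> {x..}" for x
  proof -
    have "{x..} \<inter> {..x} = {x}" by auto
    with openin_Int[OF that(2,1)] show ?thesis by simp
  qed
  then have "Gamma \<tau> \<subseteq> {x. openin \<tau> {x}} \<union> ?R \<union> ?L"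
    by blast
  moreover have "countable {x. openin \<tau> {x}}"
    using second_countable_imp_countable_isolated_points[OF assms] .
  moreover have "countable ?R"
  proof (rule countable_right_isolated)
    fix x assume "x \<in> ?R"
    then obtain e where "e > 0" "{x<..<x+e} \<inter> Gamma \<tau> = {}"
      using Gamma_free_right by blast
    then show "\<exists>e>0. {x<..<x+e} \<inter> ?R = {}"
      by blast
  qed
  moreover have "countable ?L"
  proof (rule countable_left_isolated)
    fix x assume "x \<in> ?L"
    then obtain e where "e > 0" "{x-e<..<x} \<inter> Gamma \<tau> = {}"
      using Gamma_free_left by blast
    then show "\<exists>e>0. {x-e<..<x} \<inter> ?L = {}"
      by blast
  qed
  ultimately show ?thesis
    by (meson countable_Un countable_subset)
qed

lemma second_countable_if_countable_Gamma:
  assumes "countable (Gamma \<tau>)"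
  shows "second_countable \<tau>"
proof -
  obtain \<B> :: "real set set" where "countable \<B>" and basis: "topological_basis \<B>"
    using ex_countable_basis by blast
  define \<S> where "\<S> = {V \<in> (\<lambda>(x, q). ball x q \<inter> side x) ` (Gamma \<tau> \<times> \<rat>). openin \<tau> V}"
  have "countable ((\<lambda>(x, q). ball x q \<inter> side x) ` (Gamma \<tau> \<times> \<rat>))"
    using assms countable_rat by (intro countable_image countable_SIGMA)
  then have "countable \<S>"
    unfolding \<S>_def by (rule countable_subset[rotated]) blast
  moreover have "openin \<tau> V" if "V \<in> \<B> \<union> \<S>" for V
    using that topological_basis_open[OF basis] openin_if_open unfolding \<S>_def by blast
  moreover have "\<exists>V \<in> \<B> \<union> \<S>. x \<in> V \<and> V \<subseteq> U" if U: "openin \<tau> U" "x \<in> U" for U x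
  proof -
    obtain e where "e > 0" and e: "ball x e \<inter> side x \<subseteq> U"
      using openin_contains_side_ball[OF U] .
    show ?thesis
    proof (cases "x \<in> Gamma \<tau>")
      case False
      then have "ball x e \<subseteq> U"
        using e by (simp add: Gamma_eq)
      moreover obtain V where "V \<in> \<B>" "x \<in> V" "V \<subseteq> ball x e"
        using topological_basisE[OF basis open_ball] \<open>e > 0\<close> by (metis centre_in_ball)
      ultimately show ?thesis
        by blast
    next
      case True
      obtain r where "r > 0" and r: "\<And>e. e \<le> r \<Longrightarrow> openin \<tau> (ball x e \<inter> side x)"
        using small_side_balls by metis
      obtain q where "q \<in> \<rat>" "0 < q" "q < min e r"
        using Rats_dense_in_real[of 0 "min e r"] \<open>e > 0\<close> \<open>r > 0\<close> by auto
      then have "ball x q \<inter> side x \<in> \<S>"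
        unfolding \<S>_def using True r[of q] by (auto intro!: image_eqI[where x="(x, q)"])
      moreover have "ball x q \<inter> side x \<subseteq> U"
        using e \<open>q < min e r\<close> by auto
      ultimately show ?thesis
        using \<open>0 < q\<close> by (intro bexI[of _ "ball x q \<inter> side x"]) auto
    qed
  qed
  ultimately show ?thesis
    unfolding second_countable_def using \<open>countable \<B>\<close> by (intro exI[of _ "\<B> \<union> \<S>"]) auto
qed

end

theorem proposition2:
  fixes \<tau> :: "real topology"
  assumes "finer_than_euclidean \<tau>"
    and "locally_connected_space \<tau>"
  shows "locally_compact_space \<tau> \<and> completely_metrizable_space \<tau> \<and> closed (Gamma \<tau>)
         \<and> (countable (Gamma \<tau>) \<longleftrightarrow> second_countable \<tau>)"
proof -
  interpret locally_connected_refinement \<tau>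
    using assms by (rule locally_connected_refinement.intro)
  show ?thesis
    using locally_compact locally_compact_imp_completely_metrizable_space[OF metrizable locally_compact]
      closed_Gamma countable_Gamma_if_second_countable second_countable_if_countable_Gamma
    by blast
qed

end
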